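(* Let $F:\mathbb{R}^N\times\mathbb{R}\times\mathbb{R}^N\times S^N\to\mathbb{R}$ be continuous and uniformly elliptic: there are $0<\lambda\le\Lambda$ with $\lambda\,\mathrm{tr}(Q)\le F(x,t,p,X)-F(x,t,p,X+Q)\le\Lambda\,\mathrm{tr}(Q)$ for all $x,p,t,X$ and all $Q\in S^N$, $Q\ge0$. Assume $F(x,t,p,0)\ge-\bar b(x)\cdot p-g(x)|p|+\bar c(x)t$ for all $x,t,p$, where $\bar b:\mathbb{R}^N\to\mathbb{R}^N$ and $g:\mathbb{R}^N\to\mathbb{R}$ are locally Lipschitz, $\bar c:\mathbb{R}^N\to\mathbb{R}$ is continuous, $g\ge0$, $\bar c\ge0$, and for some $R_o>0$ $$\bar b(x)\cdot x+g(x)|x|\le\bar c(x)|x|^2\log|x|+\lambda-(N-1)\Lambda\quad\text{for }|x|\ge R_o.$$ Let $u\in USC(\mathbb{R}^N)$ be a viscosity subsolution of $F(x,u,Du,D^2u)=0$ in $\mathbb{R}^N$ with $\limsup_{|x|\to\infty}u(x)/\log|x|\le0$. If either $\bar c\equiv0$ or $u\ge0$, then $u$ is constant.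
   Context: $S^N$ is the space of real symmetric $N\times N$ matrices. *)

theory Defs
  imports "HOL-Analysis.Analysis"
begin

definition usc :: "('a::topological_space \<Rightarrow> real) \<Rightarrow> bool" where
  "usc u \<longleftrightarrow> (\<forall>x a. u x < a \<longrightarrow> (\<forall>\<^sub>F y in at x. u y < a))"

definition symmetric_mat :: "real^'n^'n \<Rightarrow> bool" where
  "symmetric_mat X \<longleftrightarrow> transpose X = X"

definition psd :: "real^'n^'n \<Rightarrow> bool" where
  "psd Q \<longleftrightarrow> symmetric_mat Q \<and> (\<forall>v. 0 \<le> v \<bullet> (Q *v v))"

definition loc_lipschitz :: "('a::metric_space \<Rightarrow> 'b::metric_space) \<Rightarrow> bool" where
  "loc_lipschitz f \<longleftrightarrow> (\<forall>x. \<exists>r>0. \<exists>L. L-lipschitz_on (cball x r) f)"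

definition C2_with :: "(real^'n \<Rightarrow> real) \<Rightarrow> (real^'n \<Rightarrow> real^'n) \<Rightarrow> (real^'n \<Rightarrow> real^'n^'n) \<Rightarrow> bool" where
  "C2_with phi Dphi Hphi \<longleftrightarrow>
     (\<forall>x. (phi has_derivative (\<lambda>h. Dphi x \<bullet> h)) (at x)) \<and>
     (\<forall>x. (Dphi has_derivative (\<lambda>h. Hphi x *v h)) (at x)) \<and>
     continuous_on UNIV Hphi"

text \<open>Ellipticity convention: F is nonincreasing in the matrix variable.\<close>
definition visc_subsolution ::
  "(real^'n \<Rightarrow> real \<Rightarrow> real^'n \<Rightarrow> real^'n^'n \<Rightarrow> real) \<Rightarrow> (real^'n \<Rightarrow> real) \<Rightarrow> bool" where
  "visc_subsolution F u \<longleftrightarrow> usc u \<and>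
     (\<forall>phi Dphi Hphi x0. C2_with phi Dphi Hphi \<and>
        (\<forall>\<^sub>F x in at x0. u x - phi x \<le> u x0 - phi x0)
        \<longrightarrow> F x0 (u x0) (Dphi x0) (Hphi x0) \<le> 0)"

end

theory Submission
  imports Defs
begin

text \<open>
  First, u attains its maximum. Otherwise u(y) > u(z) = max {u x | |x| \<le> R} for some y, where
  R = max R_o 2. The radial function u(z) + \<delta> + \<epsilon> (log_barrier |x|^2 - log_barrier R^2), which
  grows like \<epsilon> ln |x|, is by the growth condition a strict supersolution for |x| > R; it lies
  above u on |x| = R, and on |x| = \<rho> for \<rho> large because limsup u / ln |x| \<le> 0. A viscosity
  subsolution cannot touch a strict radial supersolution from below inside an annulus, so u
  stays below the barrier on R \<le> |x| \<le> \<rho>, which fails at y once \<epsilon> is small.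

  Second, the strong maximum principle: if u(x) < M = max u, let \<rho> be the distance from x to
  the closed set {u = M}, attained at x1. With 2 \<delta> = M - max {u w | |w - x| \<le> \<rho>/2} and \<alpha>
  large, the Hopf barrier M + \<delta> (exp (-\<alpha> \<rho>^2) - exp (-\<alpha> |w - x|^2)) is a strict
  supersolution on \<rho>/2 < |w - x| < 2 \<rho> lying above u on both boundary spheres, yet it equals
  M = u(x1) at x1.
\<close>

definition outer :: "real^'n \<Rightarrow> real^'n \<Rightarrow> real^'n^'n" where
  "outer d e = (\<chi> i j. d$i * e$j)"

lemma trace_outer_self: "trace (outer d d) = d \<bullet> d"
  by (simp add: trace_def outer_def inner_vec_def)

lemma trace_scaleR: "trace (c *\<^sub>R (A::real^'n^'n)) = c * trace A"
  by (simp add: trace_def sum_distrib_left)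

lemma outer_mult_vector: "outer d e *v v = (e \<bullet> v) *\<^sub>R d"
  by (simp add: outer_def matrix_vector_mult_def inner_vec_def vec_eq_iff sum_distrib_left
      algebra_simps)

lemma symmetric_mat_outer_self: "symmetric_mat (outer d d)"
  by (simp add: symmetric_mat_def outer_def transpose_def vec_eq_iff mult.commute)

lemma symmetric_mat_mat: "symmetric_mat (mat k)"
  by (simp add: symmetric_mat_def)

lemma symmetric_mat_scaleR: "symmetric_mat A \<Longrightarrow> symmetric_mat (c *\<^sub>R A)"
  by (simp add: symmetric_mat_def transpose_scalar)

lemma symmetric_mat_diff: "symmetric_mat A \<Longrightarrow> symmetric_mat B \<Longrightarrow> symmetric_mat (A - B)"
  by (simp add: symmetric_mat_def transpose_def vec_eq_iff)

lemma psd_scaleR_outer_self: "0 \<le> c \<Longrightarrow> psd (c *\<^sub>R outer d d)"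
  by (simp add: psd_def symmetric_mat_scaleR symmetric_mat_outer_self outer_mult_vector
      scaleR_matrix_vector_assoc[symmetric] inner_commute[of _ d] mult.assoc)

lemma psd_scaleR_orthogonal_projection:
  assumes "0 \<le> a" "d \<noteq> 0"
  shows "psd (a *\<^sub>R (mat 1 - (1 / (d \<bullet> d)) *\<^sub>R outer d d))"
proof -
  let ?P = "mat 1 - (1 / (d \<bullet> d)) *\<^sub>R outer d d"
  have "0 \<le> v \<bullet> (?P *v v)" for v
  proof -
    have "?P *v v = v - ((d \<bullet> v) / (d \<bullet> d)) *\<^sub>R d"
      by (simp add: matrix_vector_mult_diff_rdistrib scaleR_matrix_vector_assoc[symmetric]
          outer_mult_vector)
    then have "v \<bullet> (?P *v v) = v \<bullet> v - (d \<bullet> v)^2 / (d \<bullet> d)"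
      by (simp add: inner_diff_right power2_eq_square inner_commute)
    also have "\<dots> \<ge> 0"
      using Cauchy_Schwarz_ineq[of d v] assms(2) by (simp add: field_simps)
    finally show ?thesis .
  qed
  moreover have "symmetric_mat ?P"
    by (intro symmetric_mat_diff symmetric_mat_mat symmetric_mat_scaleR symmetric_mat_outer_self)
  ultimately show ?thesis
    using assms(1) by (simp add: psd_def symmetric_mat_scaleR scaleR_matrix_vector_assoc[symmetric])
qed

text \<open>Write a I + b d d^T = P - N with N = c d d^T, c = -(a + b |d|^2)/|d|^2 \<ge> 0, and P = a times the
  projection onto the orthogonal complement of d; then tr N = -(a + b |d|^2) and tr P = a (CARD('n) - 1).\<close>
lemma elliptic_radial_hessian_lower_bound:
  fixes F :: "real^'n \<Rightarrow> real \<Rightarrow> real^'n \<Rightarrow> real^'n^'n \<Rightarrow> real"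
  assumes elliptic: "\<And>x t p X Q. symmetric_mat X \<Longrightarrow> psd Q \<Longrightarrow>
        lam * trace Q \<le> F x t p X - F x t p (X + Q) \<and> F x t p X - F x t p (X + Q) \<le> Lam * trace Q"
    and "0 \<le> a" "a + b * (d \<bullet> d) \<le> 0" "d \<noteq> 0"
  shows "F x t p 0 - Lam * a * (real CARD('n) - 1) - lam * (a + b * (d \<bullet> d))
      \<le> F x t p (a *\<^sub>R mat 1 + b *\<^sub>R outer d d)"
proof -
  define s where "s = d \<bullet> d"
  have "0 < s" using assms(4) by (simp add: s_def)
  define c where "c = - (a + b * s) / s"
  have "0 \<le> c" using assms(3) \<open>0 < s\<close> by (simp add: c_def s_def divide_nonpos_pos)
  define N where "N = c *\<^sub>R outer d d"
  define P where "P = a *\<^sub>R (mat 1 - (1 / s) *\<^sub>R outer d d)"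
  have psd_N: "psd N" and psd_P: "psd P"
    unfolding N_def P_def s_def
    using \<open>0 \<le> c\<close> assms(2,4) by (simp_all add: psd_scaleR_outer_self psd_scaleR_orthogonal_projection)
  have sym_N: "symmetric_mat (- N)"
    using symmetric_mat_scaleR[OF symmetric_mat_outer_self, of "- c" d] by (simp add: N_def)
  have "- N + P = a *\<^sub>R mat 1 + (- c - a / s) *\<^sub>R outer d d"
    by (simp add: P_def N_def algebra_simps scaleR_diff_right scaleR_add_left)
  also have "- c - a / s = b" using \<open>0 < s\<close> by (simp add: c_def field_simps)
  finally have decomposition: "- N + P = a *\<^sub>R mat 1 + b *\<^sub>R outer d d" .
  have "trace N = - (a + b * s)"
    using \<open>0 < s\<close> by (simp add: N_def trace_scaleR trace_outer_self c_def s_def)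
  then have "lam * (- (a + b * s)) \<le> F x t p (- N) - F x t p 0"
    using elliptic[OF sym_N psd_N, of x t p] by simp
  moreover have "trace P = a * (real CARD('n) - 1)"
    using \<open>0 < s\<close> by (simp add: P_def trace_scaleR trace_sub trace_I trace_outer_self s_def)
  then have "F x t p (- N) - F x t p (a *\<^sub>R mat 1 + b *\<^sub>R outer d d) \<le> Lam * (a * (real CARD('n) - 1))"
    using elliptic[OF sym_N psd_P, of x t p] decomposition by simp
  ultimately show ?thesis by (simp add: s_def algebra_simps)
qed

lemma dist_power2_eq_inner: "(dist c x)^2 = (x - c) \<bullet> (x - c)"
  by (metis dist_norm dist_commute power2_norm_eq_inner)

lemma C2_with_radial:
  fixes c :: "real^'n"
  assumes deriv: "\<And>s. 0 \<le> s \<Longrightarrow> (h has_real_derivative h' s) (at s)"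
    and deriv': "\<And>s. 0 \<le> s \<Longrightarrow> (h' has_real_derivative h'' s) (at s)"
    and cont'': "\<And>s. 0 \<le> s \<Longrightarrow> isCont h'' s"
  shows "C2_with (\<lambda>x. h ((x - c) \<bullet> (x - c))) (\<lambda>x. (2 * h' ((x - c) \<bullet> (x - c))) *\<^sub>R (x - c))
     (\<lambda>x. (2 * h' ((x - c) \<bullet> (x - c))) *\<^sub>R mat 1 + (4 * h'' ((x - c) \<bullet> (x - c))) *\<^sub>R outer (x - c) (x - c))"
  unfolding C2_with_def
proof (intro conjI allI)
  fix x :: "real^'n"
  define s where "s = (x - c) \<bullet> (x - c)"
  have "0 \<le> s" by (simp add: s_def)
  have q: "((\<lambda>x. (x - c) \<bullet> (x - c)) has_derivative (\<lambda>k. (2 *\<^sub>R (x - c)) \<bullet> k)) (at x)"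
    by (rule has_derivative_eq_rhs, (rule derivative_eq_intros | simp)+)
       (auto simp: inner_commute algebra_simps fun_eq_iff inner_add_left)
  have "((\<lambda>x. h ((x - c) \<bullet> (x - c))) has_derivative (\<lambda>k. h' s * ((2 *\<^sub>R (x - c)) \<bullet> k))) (at x)"
    using has_derivative_compose[OF q, of h "(*) (h' s)"] deriv[OF \<open>0 \<le> s\<close>]
    unfolding has_field_derivative_def s_def by simp
  then show "((\<lambda>x. h ((x - c) \<bullet> (x - c))) has_derivative
      (\<lambda>k. (2 * h' ((x - c) \<bullet> (x - c))) *\<^sub>R (x - c) \<bullet> k)) (at x)"
    by (rule has_derivative_eq_rhs) (auto simp: s_def fun_eq_iff)
  have d1: "((\<lambda>x. h' ((x - c) \<bullet> (x - c))) has_derivative (\<lambda>k. h'' s * ((2 *\<^sub>R (x - c)) \<bullet> k))) (at x)"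
    using has_derivative_compose[OF q, of h' "(*) (h'' s)"] deriv'[OF \<open>0 \<le> s\<close>]
    unfolding has_field_derivative_def s_def by simp
  have "((\<lambda>x. (2 * h' ((x - c) \<bullet> (x - c))) *\<^sub>R (x - c)) has_derivative
      (\<lambda>k. (2 * h' s) *\<^sub>R k + (2 * (h'' s * ((2 *\<^sub>R (x - c)) \<bullet> k))) *\<^sub>R (x - c))) (at x)"
    by (rule has_derivative_eq_rhs[OF has_derivative_scaleR[OF has_derivative_mult_right[OF d1]]],
        (rule derivative_eq_intros | simp)+)
       (auto simp: s_def fun_eq_iff algebra_simps)
  then show "((\<lambda>x. (2 * h' ((x - c) \<bullet> (x - c))) *\<^sub>R (x - c)) has_derivative
      (\<lambda>k. ((2 * h' ((x - c) \<bullet> (x - c))) *\<^sub>R mat 1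
              + (4 * h'' ((x - c) \<bullet> (x - c))) *\<^sub>R outer (x - c) (x - c)) *v k)) (at x)"
    by (rule has_derivative_eq_rhs)
       (auto simp: s_def fun_eq_iff matrix_vector_mult_add_rdistrib outer_mult_vector
         scaleR_matrix_vector_assoc[symmetric] algebra_simps inner_commute)
next
  have q: "continuous_on UNIV (\<lambda>x::real^'n. (x - c) \<bullet> (x - c))"
    by (intro continuous_intros)
  have "isCont h' s" if "0 \<le> s" for s
    using deriv'[OF that] by (rule DERIV_isCont)
  then have "continuous_on UNIV (\<lambda>x::real^'n. h' ((x - c) \<bullet> (x - c)))"
    and "continuous_on UNIV (\<lambda>x::real^'n. h'' ((x - c) \<bullet> (x - c)))"
    using q cont'' by (auto simp: continuous_on_eq_continuous_at intro!: continuous_at_compose[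
        where f = "\<lambda>x. (x - c) \<bullet> (x - c)", unfolded o_def] continuous_intros)
  moreover have "continuous_on UNIV (\<lambda>x::real^'n. outer (x - c) (x - c))"
    unfolding outer_def by (intro continuous_intros continuous_on_vec_lambda continuous_on_component)
  ultimately show "continuous_on UNIV (\<lambda>x. (2 * h' ((x - c) \<bullet> (x - c))) *\<^sub>R mat 1
      + (4 * h'' ((x - c) \<bullet> (x - c))) *\<^sub>R outer (x - c) (x - c))"
    by (intro continuous_intros)
qed

lemma usc_open_sublevel:
  assumes "usc f" shows "open {x. f x < a}"
proof (subst open_subopen, intro ballI)
  fix x assume "x \<in> {x. f x < a}"
  then have "f x < a" by simp
  with assms have "\<forall>\<^sub>F y in at x. f y < a" unfolding usc_def by blast
  then obtain T where "open T" "x \<in> T" "\<And>y. y \<in> T \<Longrightarrow> y \<noteq> x \<Longrightarrow> f y < a"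
    unfolding eventually_at_topological by blast
  with \<open>f x < a\<close> show "\<exists>T. open T \<and> x \<in> T \<and> T \<subseteq> {x. f x < a}"
    by (intro exI[of _ T]) auto
qed

lemma usc_diff_continuous:
  assumes "usc u" "continuous_on UNIV phi"
  shows "usc (\<lambda>x. u x - phi x)"
  unfolding usc_def
proof (intro allI impI)
  fix x a assume "u x - phi x < a"
  define e where "e = a + phi x - u x"
  have "0 < e" using \<open>u x - phi x < a\<close> by (simp add: e_def)
  have "\<forall>\<^sub>F y in at x. u y < u x + e / 2"
    using assms(1) \<open>0 < e\<close> unfolding usc_def by simp
  moreover have "(phi \<longlongrightarrow> phi x) (at x)"
    using assms(2) by (simp add: continuous_on_def)
  then have "\<forall>\<^sub>F y in at x. dist (phi y) (phi x) < e / 2"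
    using \<open>0 < e\<close> unfolding tendsto_iff by (metis half_gt_zero)
  ultimately show "\<forall>\<^sub>F y in at x. u y - phi y < a"
  proof eventually_elim
    case (elim y)
    then have "phi x - phi y < e / 2" unfolding dist_real_def abs_diff_less_iff by linarith
    with elim(1) show ?case unfolding e_def by (simp add: field_simps)
  qed
qed

lemma usc_attains_max:
  assumes "usc f" "compact K" "K \<noteq> {}"
  obtains x where "x \<in> K" "\<And>y. y \<in> K \<Longrightarrow> f y \<le> f x"
proof (rule ccontr)
  assume "\<not> thesis"
  with that have "\<forall>x\<in>K. \<exists>y\<in>K. f x < f y" by (meson not_le)
  then have "K \<subseteq> (\<Union>y\<in>K. {x. f x < f y})" by blast
  then obtain C where C: "C \<subseteq> K" "finite C" "K \<subseteq> (\<Union>y\<in>C. {x. f x < f y})"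
    using compactE_image[OF assms(2) usc_open_sublevel[OF assms(1)]] by blast
  then have "C \<noteq> {}" using assms(3) by auto
  then have "Max (f ` C) \<in> f ` C" using C(2) by simp
  then obtain y0 where "y0 \<in> C" "f y0 = Max (f ` C)" by auto
  then have "\<And>y. y \<in> C \<Longrightarrow> f y \<le> f y0" using C(2) by simp
  moreover obtain y where "y \<in> C" "f y0 < f y" using C \<open>y0 \<in> C\<close> by blast
  ultimately show False by (meson not_le)
qed

lemma usc_local_max_in_annulus:
  fixes f :: "real^'n \<Rightarrow> real"
  assumes "usc f"
    and boundary: "\<And>x. dist c x = ra \<or> dist c x = rb \<Longrightarrow> f x < 0"
    and "ra \<le> dist c y" "dist c y \<le> rb" "0 \<le> f y"
  obtains x0 where "ra < dist c x0" "dist c x0 < rb" "0 \<le> f x0" "\<forall>\<^sub>F x in at x0. f x \<le> f x0"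
proof -
  define K where "K = cball c rb - ball c ra"
  have "compact K" unfolding K_def by (intro compact_diff compact_cball open_ball)
  moreover have "y \<in> K" using assms(3,4) by (auto simp: K_def)
  ultimately obtain x0 where "x0 \<in> K" and max: "\<And>z. z \<in> K \<Longrightarrow> f z \<le> f x0"
    using usc_attains_max[OF \<open>usc f\<close>] by blast
  have "0 \<le> f x0" using max[OF \<open>y \<in> K\<close>] \<open>0 \<le> f y\<close> by simp
  then have "dist c x0 \<noteq> ra" "dist c x0 \<noteq> rb" using boundary by force+
  with \<open>x0 \<in> K\<close> have inside: "ra < dist c x0" "dist c x0 < rb" by (auto simp: K_def)
  have "open (ball c rb - cball c ra)" by (intro open_Diff open_ball closed_cball)
  moreover have "ball c rb - cball c ra \<subseteq> K" by (auto simp: K_def)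
  ultimately have "\<forall>\<^sub>F x in at x0. f x \<le> f x0"
    unfolding eventually_at_topological using inside max by (intro exI[of _ "ball c rb - cball c ra"]) auto
  with inside \<open>0 \<le> f x0\<close> show thesis using that by blast
qed

lemma subsolution_below_radial_supersolution:
  fixes F :: "real^'n \<Rightarrow> real \<Rightarrow> real^'n \<Rightarrow> real^'n^'n \<Rightarrow> real"
    and h h' h'' :: "real \<Rightarrow> real"
  assumes sub: "visc_subsolution F u"
    and deriv: "\<And>s. 0 \<le> s \<Longrightarrow> (h has_real_derivative h' s) (at s)"
    and deriv': "\<And>s. 0 \<le> s \<Longrightarrow> (h' has_real_derivative h'' s) (at s)"
    and cont'': "\<And>s. 0 \<le> s \<Longrightarrow> isCont h'' s"
    and strict: "\<And>x. ra < dist c x \<Longrightarrow> dist c x < rb \<Longrightarrow> h ((dist c x)^2) \<le> u x \<Longrightarrow>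
        0 < F x (u x) ((2 * h' ((dist c x)^2)) *\<^sub>R (x - c))
              ((2 * h' ((dist c x)^2)) *\<^sub>R mat 1 + (4 * h'' ((dist c x)^2)) *\<^sub>R outer (x - c) (x - c))"
    and boundary: "\<And>x. dist c x = ra \<or> dist c x = rb \<Longrightarrow> u x < h ((dist c x)^2)"
    and y: "ra \<le> dist c y" "dist c y \<le> rb"
  shows "u y < h ((dist c y)^2)"
proof (rule ccontr)
  assume "\<not> ?thesis"
  then have above: "h ((dist c y)^2) \<le> u y" by simp
  define phi where "phi = (\<lambda>x. h ((x - c) \<bullet> (x - c)))"
  have C2: "C2_with phi (\<lambda>x. (2 * h' ((x - c) \<bullet> (x - c))) *\<^sub>R (x - c))
     (\<lambda>x. (2 * h' ((x - c) \<bullet> (x - c))) *\<^sub>R mat 1 + (4 * h'' ((x - c) \<bullet> (x - c))) *\<^sub>R outer (x - c) (x - c))"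
    unfolding phi_def by (rule C2_with_radial[OF deriv deriv' cont''])
  then have "continuous_on UNIV phi"
    unfolding C2_with_def by (meson continuous_at_imp_continuous_on has_derivative_continuous)
  then have "usc (\<lambda>x. u x - phi x)"
    using sub by (intro usc_diff_continuous) (simp_all add: visc_subsolution_def)
  then obtain x0 where x0: "ra < dist c x0" "dist c x0 < rb" "0 \<le> u x0 - phi x0"
      "\<forall>\<^sub>F x in at x0. u x - phi x \<le> u x0 - phi x0"
    by (rule usc_local_max_in_annulus[of _ c ra rb y])
       (use boundary y above in \<open>auto simp: phi_def dist_power2_eq_inner\<close>)
  have "F x0 (u x0) ((2 * h' ((x0 - c) \<bullet> (x0 - c))) *\<^sub>R (x0 - c))
      ((2 * h' ((x0 - c) \<bullet> (x0 - c))) *\<^sub>R mat 1 + (4 * h'' ((x0 - c) \<bullet> (x0 - c))) *\<^sub>R outer (x0 - c) (x0 - c))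
      \<le> 0"
    using sub C2 x0(4) unfolding visc_subsolution_def by blast
  moreover have "h ((dist c x0)^2) \<le> u x0" using x0(3) by (simp add: phi_def dist_power2_eq_inner)
  ultimately show False using strict[OF x0(1,2)] by (simp add: dist_power2_eq_inner)
qed

text \<open>A smoothing of ln |x| in the variable s = |x|^2. For ln |x| itself the second-order term
  \<lambda> (2 a + b |x|^2) of the radial ellipticity bound vanishes; the correction -1/(1 + s) makes it
  strictly negative.\<close>
definition log_barrier :: "real \<Rightarrow> real" where
  "log_barrier s = ln (1 + s) / 2 - 1 / (1 + s)"

definition log_barrier' :: "real \<Rightarrow> real" where
  "log_barrier' s = (s + 3) / (2 * (s + 1)^2)"

definition log_barrier'' :: "real \<Rightarrow> real" where
  "log_barrier'' s = - (s + 5) / (2 * (s + 1)^3)"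

lemma has_real_derivative_log_barrier:
  assumes "-1 < s"
  shows "(log_barrier has_real_derivative log_barrier' s) (at s)"
proof -
  have "0 < 1 + s" "s + 1 \<noteq> 0" using assms by simp_all
  then have "(log_barrier has_real_derivative inverse (1 + s) / 2 + inverse ((1 + s)^2)) (at s)"
    unfolding log_barrier_def[abs_def]
    by (auto intro!: derivative_eq_intros simp: field_simps power2_eq_square)
  then show ?thesis
    by (rule DERIV_cong) (use \<open>s + 1 \<noteq> 0\<close> in \<open>simp add: log_barrier'_def divide_simps, algebra\<close>)
qed

lemma has_real_derivative_log_barrier':
  assumes "-1 < s"
  shows "(log_barrier' has_real_derivative log_barrier'' s) (at s)"
proof -
  have "s + 1 \<noteq> 0" using assms by simp
  then show ?thesis
    unfolding log_barrier'_def[abs_def] log_barrier''_def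
    by (auto intro!: derivative_eq_intros simp: divide_simps) algebra
qed

lemma log_barrier'_pos: "-1 < s \<Longrightarrow> 0 < log_barrier' s"
  by (simp add: log_barrier'_def)

lemma log_barrier_radially_concave:
  assumes "1 \<le> s"
  shows "log_barrier' s + 2 * s * log_barrier'' s \<le> 0"
proof -
  have "s + 1 \<noteq> 0" using assms by simp
  then have "log_barrier' s + 2 * s * log_barrier'' s = (3 - 6 * s - s^2) / (2 * (s + 1)^3)"
    unfolding log_barrier'_def log_barrier''_def by (simp add: divide_simps) algebra
  also have "\<dots> \<le> 0"
  proof (intro divide_nonpos_pos)
    show "3 - 6 * s - s^2 \<le> 0" using assms by (smt (verit) zero_le_power2)
  qed (use assms in simp)
  finally show ?thesis .
qed

lemma log_barrier_radial_strict:
  assumes "3 < s"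
  shows "log_barrier' s + s * log_barrier'' s < 0"
proof -
  have "s + 1 \<noteq> 0" using assms by simp
  then have "log_barrier' s + s * log_barrier'' s = (3 - s) / (2 * (s + 1)^3)"
    unfolding log_barrier'_def log_barrier''_def by (simp add: divide_simps) algebra
  also have "\<dots> < 0" using assms by (intro divide_neg_pos) auto
  finally show ?thesis .
qed

lemma log_barrier'_ln_bound:
  assumes "0 \<le> s"
  shows "2 * s * log_barrier' s * (ln (1 + s) / 2) \<le> ln (1 + s) / 2 + 1"
proof -
  define L where "L = ln (1 + s) / 2"
  have "0 \<le> L" "L \<le> s / 2"
    using assms ln_add_one_self_le_self[of s] by (simp_all add: L_def)
  have "L * (s - 1) \<le> (s + 1)^2"
  proof (cases "1 \<le> s")
    case True
    then have "L * (s - 1) \<le> s / 2 * (s - 1)" using \<open>L \<le> s / 2\<close> by (intro mult_right_mono) auto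
    also have "\<dots> \<le> (s + 1)^2" using assms by (simp add: power2_eq_square algebra_simps)
    finally show ?thesis .
  next
    case False
    then have "L * (s - 1) \<le> 0" using \<open>0 \<le> L\<close> by (simp add: mult_nonneg_nonpos)
    then show ?thesis by (smt (verit) zero_le_power2)
  qed
  then have "L * (s - 1) / (s + 1)^2 \<le> 1"
    using assms by (simp add: pos_divide_le_eq)
  moreover have "s + 1 \<noteq> 0" using assms by simp
  then have "2 * s * log_barrier' s = 1 + (s - 1) / (s + 1)^2"
    by (simp add: log_barrier'_def divide_simps) algebra
  ultimately show ?thesis by (simp add: L_def[symmetric] algebra_simps)
qed

lemma ln_le_half_ln_one_add_power2:
  fixes r :: real
  assumes "0 < r"
  shows "ln r \<le> ln (1 + r^2) / 2"
proof -
  have "ln (r^2) \<le> ln (1 + r^2)" using assms by (subst ln_le_cancel_iff) (auto intro: add_pos_nonneg)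
  then show ?thesis using assms by (simp add: ln_realpow)
qed

lemma half_ln_one_add_le_log_barrier: "0 \<le> s \<Longrightarrow> ln (1 + s) / 2 - 1 \<le> log_barrier s"
  by (simp add: log_barrier_def)

lemma ln_sub_one_le_log_barrier: "0 < r \<Longrightarrow> ln r - 1 \<le> log_barrier (r^2)"
  using ln_le_half_ln_one_add_power2[of r] half_ln_one_add_le_log_barrier[of "r^2"] by simp

lemma log_barrier_strict_supersolution:
  fixes F :: "real^'n \<Rightarrow> real \<Rightarrow> real^'n \<Rightarrow> real^'n^'n \<Rightarrow> real"
    and bb :: "real^'n \<Rightarrow> real^'n" and g cc :: "real^'n \<Rightarrow> real"
  assumes lam_pos: "0 < lam"
    and elliptic: "\<And>x t p X Q. symmetric_mat X \<Longrightarrow> psd Q \<Longrightarrow>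
        lam * trace Q \<le> F x t p X - F x t p (X + Q) \<and> F x t p X - F x t p (X + Q) \<le> Lam * trace Q"
    and F_lower: "\<And>x t p. F x t p 0 \<ge> - (bb x \<bullet> p) - g x * norm p + cc x * t"
    and growth: "bb x \<bullet> x + g x * norm x
        \<le> cc x * (norm x)^2 * ln (norm x) + lam - (real CARD('n) - 1) * Lam"
    and "0 \<le> cc x" "2 < norm x" "0 < \<epsilon>"
    and large: "cc x \<noteq> 0 \<Longrightarrow> \<epsilon> * (ln (1 + (norm x)^2) / 2 + 1) \<le> t"
  defines "a \<equiv> 2 * \<epsilon> * log_barrier' ((norm x)^2)"
    and "b \<equiv> 4 * \<epsilon> * log_barrier'' ((norm x)^2)"
  shows "0 < F x t (a *\<^sub>R x) (a *\<^sub>R mat 1 + b *\<^sub>R outer x x)"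
proof -
  define r where "r = norm x"
  define s where "s = r^2"
  have "4 < s"
    using power_strict_mono[OF \<open>2 < norm x\<close>, of 2] by (simp add: s_def r_def)
  have xx: "x \<bullet> x = s" by (simp add: s_def r_def power2_norm_eq_inner)
  have "x \<noteq> 0" using \<open>2 < norm x\<close> by auto
  have "0 < a" using \<open>0 < \<epsilon>\<close> \<open>4 < s\<close> log_barrier'_pos[of s] by (simp add: a_def s_def r_def)
  have "a + b * (x \<bullet> x) = 2 * \<epsilon> * (log_barrier' s + 2 * s * log_barrier'' s)"
    by (simp add: a_def b_def xx s_def r_def algebra_simps)
  also have "\<dots> \<le> 0"
    using \<open>0 < \<epsilon>\<close> \<open>4 < s\<close> log_barrier_radially_concave[of s] by (simp add: mult_nonneg_nonpos)
  finally have hessian: "F x t (a *\<^sub>R x) 0 - Lam * a * (real CARD('n) - 1) - lam * (a + b * s)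
      \<le> F x t (a *\<^sub>R x) (a *\<^sub>R mat 1 + b *\<^sub>R outer x x)"
    using elliptic_radial_hessian_lower_bound[where F = F and x = x and t = t and p = "a *\<^sub>R x"
        and a = a and b = b and d = x, OF elliptic] \<open>0 < a\<close> \<open>x \<noteq> 0\<close>
    by (simp add: xx)
  have "- a * (bb x \<bullet> x + g x * r) + cc x * t \<le> F x t (a *\<^sub>R x) 0"
    using F_lower[where x = x and t = t and p = "a *\<^sub>R x"] \<open>0 < a\<close> by (simp add: r_def algebra_simps)
  moreover have "a * (bb x \<bullet> x + g x * r) \<le> a * (cc x * s * ln r + lam - (real CARD('n) - 1) * Lam)"
    using growth \<open>0 < a\<close> by (simp add: r_def s_def)
  moreover have "0 \<le> cc x * (t - a * s * ln r)"
  proof (cases "cc x = 0")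
    case False
    define L where "L = ln (1 + s) / 2"
    have "ln r \<le> L"
      using ln_le_half_ln_one_add_power2[of r] \<open>x \<noteq> 0\<close> by (simp add: L_def s_def r_def)
    then have "a * s * ln r \<le> a * s * L"
      using \<open>0 < a\<close> \<open>4 < s\<close> by (intro mult_left_mono) auto
    also have "\<dots> = \<epsilon> * (2 * s * log_barrier' s * L)" by (simp add: a_def s_def r_def)
    also have "\<dots> \<le> \<epsilon> * (L + 1)"
      using log_barrier'_ln_bound[of s] \<open>0 < \<epsilon>\<close> \<open>4 < s\<close> by (simp add: L_def)
    also have "\<dots> \<le> t" using large False by (simp add: L_def s_def r_def)
    finally show ?thesis using \<open>0 \<le> cc x\<close> by simp
  qed simp
  moreover have "2 * a + b * s = 4 * \<epsilon> * (log_barrier' s + s * log_barrier'' s)"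
    by (simp add: a_def b_def s_def r_def algebra_simps)
  then have "lam * (2 * a + b * s) < 0"
    using lam_pos \<open>0 < \<epsilon>\<close> \<open>4 < s\<close> log_barrier_radial_strict[of s] by (simp add: mult_pos_neg)
  moreover have "cc x * t - a * (cc x * s * ln r + lam - (real CARD('n) - 1) * Lam)
      - Lam * a * (real CARD('n) - 1) - lam * (a + b * s)
      = cc x * (t - a * s * ln r) - lam * (2 * a + b * s)"
    by (simp add: algebra_simps)
  ultimately show ?thesis using hessian by linarith
qed

lemma subsolution_below_log_barrier:
  fixes F :: "real^'n \<Rightarrow> real \<Rightarrow> real^'n \<Rightarrow> real^'n^'n \<Rightarrow> real"
    and bb :: "real^'n \<Rightarrow> real^'n" and g cc :: "real^'n \<Rightarrow> real"
  assumes lam_pos: "0 < lam"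
    and elliptic: "\<And>x t p X Q. symmetric_mat X \<Longrightarrow> psd Q \<Longrightarrow>
        lam * trace Q \<le> F x t p X - F x t p (X + Q) \<and> F x t p X - F x t p (X + Q) \<le> Lam * trace Q"
    and F_lower: "\<And>x t p. F x t p 0 \<ge> - (bb x \<bullet> p) - g x * norm p + cc x * t"
    and cc_nonneg: "\<And>x. cc x \<ge> 0"
    and growth: "\<And>x. norm x \<ge> Ro \<Longrightarrow>
        bb x \<bullet> x + g x * norm x \<le> cc x * (norm x)\<^sup>2 * ln (norm x) + lam - (real CARD('n) - 1) * Lam"
    and sub: "visc_subsolution F u"
    and "0 < \<epsilon>" "max Ro 2 \<le> ra"
    and cc_offset: "\<And>x. cc x \<noteq> 0 \<Longrightarrow> 2 * \<epsilon> \<le> A"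
    and boundary: "\<And>x. norm x = ra \<or> norm x = rb \<Longrightarrow> u x < A + \<epsilon> * log_barrier ((norm x)^2)"
    and y: "ra \<le> norm y" "norm y \<le> rb"
  shows "u y < A + \<epsilon> * log_barrier ((norm y)^2)"
proof -
  have "u y < A + \<epsilon> * log_barrier ((dist 0 y)^2)"
  proof (rule subsolution_below_radial_supersolution[OF sub, where h = "\<lambda>s. A + \<epsilon> * log_barrier s"
        and h' = "\<lambda>s. \<epsilon> * log_barrier' s" and h'' = "\<lambda>s. \<epsilon> * log_barrier'' s" and c = 0
        and ra = ra and rb = rb])
    fix s :: real assume "0 \<le> s"
    then show "((\<lambda>s. A + \<epsilon> * log_barrier s) has_real_derivative \<epsilon> * log_barrier' s) (at s)"
      using DERIV_add[OF DERIV_const DERIV_cmult[OF has_real_derivative_log_barrier]] by simp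
    show "((\<lambda>s. \<epsilon> * log_barrier' s) has_real_derivative \<epsilon> * log_barrier'' s) (at s)"
      using \<open>0 \<le> s\<close> by (intro DERIV_cmult has_real_derivative_log_barrier') simp
    show "isCont (\<lambda>s. \<epsilon> * log_barrier'' s) s"
      using \<open>0 \<le> s\<close> unfolding log_barrier''_def by (intro continuous_intros) auto
  next
    fix x :: "real^'n"
    assume x: "ra < dist 0 x" "dist 0 x < rb" "A + \<epsilon> * log_barrier ((dist 0 x)^2) \<le> u x"
    have "\<epsilon> * (ln (1 + (norm x)^2) / 2 - 1) \<le> \<epsilon> * log_barrier ((norm x)^2)"
      using half_ln_one_add_le_log_barrier[of "(norm x)^2"] \<open>0 < \<epsilon>\<close> by simp
    then have "\<epsilon> * (ln (1 + (norm x)^2) / 2 + 1) \<le> u x" if "cc x \<noteq> 0"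
      using x(3) cc_offset[OF that] by (simp add: algebra_simps)
    then show "0 < F x (u x) ((2 * (\<epsilon> * log_barrier' ((dist 0 x)^2))) *\<^sub>R (x - 0))
        ((2 * (\<epsilon> * log_barrier' ((dist 0 x)^2))) *\<^sub>R mat 1
          + (4 * (\<epsilon> * log_barrier'' ((dist 0 x)^2))) *\<^sub>R outer (x - 0) (x - 0))"
      using log_barrier_strict_supersolution[where F = F and x = x and t = "u x",
          OF lam_pos elliptic F_lower growth cc_nonneg _ \<open>0 < \<epsilon>\<close>]
        x(1) \<open>max Ro 2 \<le> ra\<close> by (simp add: mult.assoc)
  qed (use boundary y in auto)
  then show ?thesis by simp
qed

lemma eventually_less_log_of_Limsup_le_0:
  fixes u :: "'a::real_normed_vector \<Rightarrow> real"
  assumes "Limsup at_infinity (\<lambda>x. ereal (u x / ln (norm x))) \<le> 0" "0 < \<epsilon>"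
  shows "\<forall>\<^sub>F x in at_infinity. u x < \<epsilon> * ln (norm x) + C"
proof -
  have "Limsup at_infinity (\<lambda>x. ereal (u x / ln (norm x))) < ereal (\<epsilon> / 2)"
    using assms by (simp add: zero_ereal_def le_less_trans)
  then have "\<forall>\<^sub>F x in at_infinity. u x / ln (norm x) < \<epsilon> / 2"
    by (auto dest: Limsup_lessD)
  moreover define K where "K = 2 * \<bar>C\<bar> / \<epsilon> + 1"
  have "\<forall>\<^sub>F x in at_infinity. exp K \<le> norm x"
    unfolding eventually_at_infinity by blast
  ultimately show ?thesis
  proof eventually_elim
    case (elim x)
    then have "0 < norm x" by (meson exp_gt_zero less_le_trans)
    then have "K \<le> ln (norm x)" using elim(2) by (simp add: ln_ge_iff)
    moreover have "1 \<le> K" "\<epsilon> * K = 2 * \<bar>C\<bar> + \<epsilon>" using \<open>0 < \<epsilon>\<close> by (simp_all add: K_def field_simps)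
    ultimately have "0 < ln (norm x)" "2 * \<bar>C\<bar> < \<epsilon> * ln (norm x)"
      using \<open>0 < \<epsilon>\<close> mult_left_mono[of K "ln (norm x)" \<epsilon>] by auto
    moreover have "u x < \<epsilon> / 2 * ln (norm x)"
      using elim(1) \<open>0 < ln (norm x)\<close> by (simp add: pos_divide_less_eq)
    ultimately show ?case using abs_ge_minus_self[of C] by linarith
  qed
qed

lemma eventually_less_log_barrier:
  fixes u :: "'a::real_normed_vector \<Rightarrow> real"
  assumes "Limsup at_infinity (\<lambda>x. ereal (u x / ln (norm x))) \<le> 0" "0 < \<epsilon>"
  shows "\<forall>\<^sub>F x in at_infinity. u x < A + \<epsilon> * log_barrier ((norm x)^2)"
proof -
  have "\<forall>\<^sub>F x in at_infinity. 1 \<le> norm x"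
    unfolding eventually_at_infinity by blast
  with eventually_less_log_of_Limsup_le_0[OF assms, of "A - \<epsilon>"] show ?thesis
  proof eventually_elim
    case (elim x)
    then have "ln (norm x) - 1 \<le> log_barrier ((norm x)^2)"
      by (intro ln_sub_one_le_log_barrier) auto
    then have "\<epsilon> * (ln (norm x) - 1) \<le> \<epsilon> * log_barrier ((norm x)^2)"
      using \<open>0 < \<epsilon>\<close> by simp
    with elim(1) show ?case by (simp add: algebra_simps)
  qed
qed

lemma subsolution_attains_max:
  fixes F :: "real^'n \<Rightarrow> real \<Rightarrow> real^'n \<Rightarrow> real^'n^'n \<Rightarrow> real"
    and bb :: "real^'n \<Rightarrow> real^'n" and g cc :: "real^'n \<Rightarrow> real" and u :: "real^'n \<Rightarrow> real"
  assumes lam_pos: "0 < lam"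
    and elliptic: "\<And>x t p X Q. symmetric_mat X \<Longrightarrow> psd Q \<Longrightarrow>
        lam * trace Q \<le> F x t p X - F x t p (X + Q) \<and> F x t p X - F x t p (X + Q) \<le> Lam * trace Q"
    and F_lower: "\<And>x t p. F x t p 0 \<ge> - (bb x \<bullet> p) - g x * norm p + cc x * t"
    and cc_nonneg: "\<And>x. cc x \<ge> 0"
    and growth: "\<And>x. norm x \<ge> Ro \<Longrightarrow>
        bb x \<bullet> x + g x * norm x \<le> cc x * (norm x)\<^sup>2 * ln (norm x) + lam - (real CARD('n) - 1) * Lam"
    and sub: "visc_subsolution F u"
    and limsup: "Limsup at_infinity (\<lambda>x. ereal (u x / ln (norm x))) \<le> 0"
    and alt: "(\<forall>x. cc x = 0) \<or> (\<forall>x. u x \<ge> 0)"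
  shows "\<exists>z. \<forall>x. u x \<le> u z"
proof -
  define R where "R = max Ro 2"
  have "usc u" using sub by (simp add: visc_subsolution_def)
  moreover have "cball 0 R \<noteq> {}" by (simp add: R_def)
  ultimately obtain z where "\<And>w. w \<in> cball 0 R \<Longrightarrow> u w \<le> u z"
    using usc_attains_max[OF _ compact_cball] by metis
  then have z: "\<And>w. norm w \<le> R \<Longrightarrow> u w \<le> u z" by simp
  have "u y \<le> u z" for y
  proof (rule ccontr)
    assume "\<not> u y \<le> u z"
    then have "R < norm y" using z[of y] by force
    define \<delta> where "\<delta> = (u y - u z) / 2"
    define WR where "WR = log_barrier (R^2)"
    have "0 < \<delta>" using \<open>\<not> u y \<le> u z\<close> by (simp add: \<delta>_def)
    have lim: "((\<lambda>\<epsilon>. \<epsilon> * c) \<longlongrightarrow> 0) (at_right 0)" for c :: real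
      by (auto intro!: tendsto_eq_intros)
    obtain \<epsilon> where "0 < \<epsilon>" and small: "\<epsilon> * (log_barrier ((norm y)^2) - WR) < \<delta>" "\<epsilon> * (2 + WR) < \<delta>"
      using eventually_happens'[OF trivial_limit_at_right_real eventually_conj[OF eventually_at_right_less
          eventually_conj[OF order_tendstoD(2)[OF lim \<open>0 < \<delta>\<close>] order_tendstoD(2)[OF lim \<open>0 < \<delta>\<close>]]]]
      by blast
    define A where "A = u z + \<delta> - \<epsilon> * WR"
    obtain b where b: "\<And>w. b \<le> norm w \<Longrightarrow> u w < A + \<epsilon> * log_barrier ((norm w)^2)"
      using eventually_less_log_barrier[OF limsup \<open>0 < \<epsilon>\<close>, of A]
      unfolding eventually_at_infinity by blast
    define \<rho> where "\<rho> = max b (norm y + 1)"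
    have "u y < A + \<epsilon> * log_barrier ((norm y)^2)"
    proof (rule subsolution_below_log_barrier[where ra = R and rb = \<rho> and A = A,
          OF lam_pos elliptic F_lower cc_nonneg growth sub \<open>0 < \<epsilon>\<close>])
      show "2 * \<epsilon> \<le> A" if "cc x \<noteq> 0" for x
      proof -
        have "0 \<le> u z" using alt that by auto
        then show ?thesis using small(2) by (simp add: A_def algebra_simps)
      qed
      show "u x < A + \<epsilon> * log_barrier ((norm x)^2)" if "norm x = R \<or> norm x = \<rho>" for x
        using that z[of x] b[of x] \<open>0 < \<delta>\<close> by (auto simp: A_def WR_def \<rho>_def)
    qed (use \<open>R < norm y\<close> in \<open>auto simp: R_def \<rho>_def\<close>)
    then show False using small(1) unfolding A_def \<delta>_def by (simp add: field_simps)
  qed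
  then show ?thesis by blast
qed

lemma exp_barrier_strict_supersolution:
  fixes F :: "real^'n \<Rightarrow> real \<Rightarrow> real^'n \<Rightarrow> real^'n^'n \<Rightarrow> real"
    and bb :: "real^'n \<Rightarrow> real^'n" and g cc :: "real^'n \<Rightarrow> real"
  assumes elliptic: "\<And>x t p X Q. symmetric_mat X \<Longrightarrow> psd Q \<Longrightarrow>
        lam * trace Q \<le> F x t p X - F x t p (X + Q) \<and> F x t p X - F x t p (X + Q) \<le> Lam * trace Q"
    and F_lower: "\<And>x t p. F x t p 0 \<ge> - (bb x \<bullet> p) - g x * norm p + cc x * t"
    and "0 < a" "0 \<le> cc x * t" "1 \<le> 2 * \<alpha> * (d \<bullet> d)"
    and dominant: "norm d * (norm (bb x) + g x) + Lam * (real CARD('n) - 1) + lam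
        < 2 * lam * \<alpha> * (d \<bullet> d)"
  shows "0 < F x t (a *\<^sub>R d) (a *\<^sub>R mat 1 + (- 2 * \<alpha> * a) *\<^sub>R outer d d)"
proof -
  have "d \<noteq> 0" using \<open>1 \<le> 2 * \<alpha> * (d \<bullet> d)\<close> by auto
  have "a + (- 2 * \<alpha> * a) * (d \<bullet> d) = a * (1 - 2 * \<alpha> * (d \<bullet> d))" by (simp add: algebra_simps)
  also have "\<dots> \<le> 0"
    using \<open>0 < a\<close> \<open>1 \<le> 2 * \<alpha> * (d \<bullet> d)\<close> by (simp add: mult_nonneg_nonpos)
  finally have hessian: "F x t (a *\<^sub>R d) 0 - Lam * a * (real CARD('n) - 1)
        - lam * (a - 2 * \<alpha> * a * (d \<bullet> d))
      \<le> F x t (a *\<^sub>R d) (a *\<^sub>R mat 1 + (- 2 * \<alpha> * a) *\<^sub>R outer d d)"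
    using elliptic_radial_hessian_lower_bound[where F = F and x = x and t = t and p = "a *\<^sub>R d"
        and a = a and b = "- 2 * \<alpha> * a" and d = d, OF elliptic] \<open>0 < a\<close> \<open>d \<noteq> 0\<close>
    by simp
  have "bb x \<bullet> (a *\<^sub>R d) \<le> a * (norm (bb x) * norm d)"
    using norm_cauchy_schwarz[of "bb x" d] \<open>0 < a\<close> by simp
  then have "- a * (norm d * (norm (bb x) + g x)) \<le> - (bb x \<bullet> (a *\<^sub>R d)) - g x * norm (a *\<^sub>R d)"
    using \<open>0 < a\<close> by (simp add: algebra_simps)
  then have "- a * (norm d * (norm (bb x) + g x)) \<le> F x t (a *\<^sub>R d) 0"
    using F_lower[where x = x and t = t and p = "a *\<^sub>R d"] \<open>0 \<le> cc x * t\<close> by linarith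
  moreover have "0 < a * (2 * lam * \<alpha> * (d \<bullet> d) - norm d * (norm (bb x) + g x)
      - Lam * (real CARD('n) - 1) - lam)"
    using \<open>0 < a\<close> dominant by simp
  ultimately show ?thesis using hessian by (simp add: algebra_simps)
qed

lemma subsolution_below_exp_barrier:
  fixes F :: "real^'n \<Rightarrow> real \<Rightarrow> real^'n \<Rightarrow> real^'n^'n \<Rightarrow> real"
    and bb :: "real^'n \<Rightarrow> real^'n" and g cc :: "real^'n \<Rightarrow> real"
  assumes elliptic: "\<And>x t p X Q. symmetric_mat X \<Longrightarrow> psd Q \<Longrightarrow>
        lam * trace Q \<le> F x t p X - F x t p (X + Q) \<and> F x t p X - F x t p (X + Q) \<le> Lam * trace Q"
    and F_lower: "\<And>x t p. F x t p 0 \<ge> - (bb x \<bullet> p) - g x * norm p + cc x * t"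
    and cc_u: "\<And>x. 0 \<le> cc x * u x"
    and sub: "visc_subsolution F u"
    and "0 < \<delta>" "0 < \<alpha>"
    and dominant: "\<And>x. ra < dist c x \<Longrightarrow> dist c x < rb \<Longrightarrow> 1 \<le> 2 * \<alpha> * (dist c x)^2 \<and>
        dist c x * (norm (bb x) + g x) + Lam * (real CARD('n) - 1) + lam < 2 * lam * \<alpha> * (dist c x)^2"
    and boundary: "\<And>x. dist c x = ra \<or> dist c x = rb \<Longrightarrow> u x < M - \<delta> * exp (- \<alpha> * (dist c x)^2)"
    and y: "ra \<le> dist c y" "dist c y \<le> rb"
  shows "u y < M - \<delta> * exp (- \<alpha> * (dist c y)^2)"
proof (rule subsolution_below_radial_supersolution[where h = "\<lambda>s. M - \<delta> * exp (- \<alpha> * s)"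
      and h' = "\<lambda>s. \<alpha> * \<delta> * exp (- \<alpha> * s)" and h'' = "\<lambda>s. - (\<alpha>^2 * \<delta> * exp (- \<alpha> * s))",
      OF sub])
  fix s :: real
  show "((\<lambda>s. M - \<delta> * exp (- \<alpha> * s)) has_real_derivative \<alpha> * \<delta> * exp (- \<alpha> * s)) (at s)"
    and "((\<lambda>s. \<alpha> * \<delta> * exp (- \<alpha> * s)) has_real_derivative - (\<alpha>^2 * \<delta> * exp (- \<alpha> * s))) (at s)"
    by (auto intro!: derivative_eq_intros simp: power2_eq_square)
  show "isCont (\<lambda>s. - (\<alpha>^2 * \<delta> * exp (- \<alpha> * s))) s"
    by (intro continuous_intros)
next
  fix x assume x: "ra < dist c x" "dist c x < rb"
  define a where "a = 2 * (\<alpha> * \<delta> * exp (- \<alpha> * (dist c x)^2))"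
  have "0 < a" using \<open>0 < \<delta>\<close> \<open>0 < \<alpha>\<close> by (simp add: a_def)
  have hessian_coefficient: "4 * - (\<alpha>^2 * \<delta> * exp (- \<alpha> * (dist c x)^2)) = - 2 * \<alpha> * a"
    by (simp add: a_def power2_eq_square)
  have d: "(dist c x)^2 = (x - c) \<bullet> (x - c)" "dist c x = norm (x - c)"
    by (rule dist_power2_eq_inner) (simp add: dist_norm norm_minus_commute)
  then have "1 \<le> 2 * \<alpha> * ((x - c) \<bullet> (x - c))"
    and "norm (x - c) * (norm (bb x) + g x) + Lam * (real CARD('n) - 1) + lam
      < 2 * lam * \<alpha> * ((x - c) \<bullet> (x - c))"
    using dominant[OF x] unfolding d by simp_all
  then show "0 < F x (u x) ((2 * (\<alpha> * \<delta> * exp (- \<alpha> * (dist c x)^2))) *\<^sub>R (x - c))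
      ((2 * (\<alpha> * \<delta> * exp (- \<alpha> * (dist c x)^2))) *\<^sub>R mat 1
        + (4 * - (\<alpha>^2 * \<delta> * exp (- \<alpha> * (dist c x)^2))) *\<^sub>R outer (x - c) (x - c))"
    unfolding a_def[symmetric] hessian_coefficient
    using exp_barrier_strict_supersolution[where F = F and x = x and t = "u x" and d = "x - c"
        and \<alpha> = \<alpha>,
        OF elliptic F_lower \<open>0 < a\<close> cc_u] by simp
qed (use boundary y in auto)

lemma usc_touching_ball:
  fixes u :: "real^'n \<Rightarrow> real"
  assumes "usc u" "u y < m" "m \<le> u z"
  obtains \<rho> x1 where "0 < \<rho>" "dist y x1 = \<rho>" "m \<le> u x1" "\<And>w. dist y w < \<rho> \<Longrightarrow> u w < m"
proof -
  let ?S = "{x. m \<le> u x}"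
  have "- ?S = {x. u x < m}" by auto
  then have "closed ?S" using usc_open_sublevel[OF assms(1), of m] by (simp add: closed_def)
  moreover have "?S \<noteq> {}" using assms(3) by auto
  ultimately obtain x1 where "x1 \<in> ?S" and nearest: "\<And>w. w \<in> ?S \<Longrightarrow> dist y x1 \<le> dist y w"
    using distance_attains_inf[of ?S y] by blast
  then have "m \<le> u x1" by simp
  then have "y \<noteq> x1" using assms(2) by auto
  show thesis
  proof (rule that)
    show "0 < dist y x1" using \<open>y \<noteq> x1\<close> by simp
    show "u w < m" if "dist y w < dist y x1" for w
      using nearest[of w] that by (meson linorder_not_le mem_Collect_eq)
  qed (use \<open>m \<le> u x1\<close> in simp_all)
qed

lemma exists_exponent_dominating:
  fixes c :: "'a::metric_space" and k :: "'a \<Rightarrow> real"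
  assumes "0 < lam" "0 < \<rho>" "0 < B" and bound: "\<And>w. dist c w \<le> 2 * \<rho> \<Longrightarrow> k w \<le> B"
  obtains \<alpha> where "0 < \<alpha>"
    "\<And>w. \<rho> / 2 < dist c w \<Longrightarrow> dist c w < 2 * \<rho> \<Longrightarrow>
       1 \<le> 2 * \<alpha> * (dist c w)^2 \<and> dist c w * k w + C < 2 * lam * \<alpha> * (dist c w)^2"
proof
  define K where "K = 2 * \<rho> * B + C"
  define \<alpha> where "\<alpha> = max (2 / \<rho>^2) ((2 * K + 2) / (lam * \<rho>^2))"
  show "0 < \<alpha>" using \<open>0 < \<rho>\<close> by (simp add: \<alpha>_def less_max_iff_disj)
  fix w assume w: "\<rho> / 2 < dist c w" "dist c w < 2 * \<rho>"
  have dist_sq: "\<rho>^2 / 4 \<le> (dist c w)^2"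
    using power_mono[of "\<rho> / 2" "dist c w" 2] w \<open>0 < \<rho>\<close> by (simp add: power_divide)
  have "2 / \<rho>^2 \<le> \<alpha>" "(2 * K + 2) / (lam * \<rho>^2) \<le> \<alpha>"
    by (simp_all add: \<alpha>_def)
  then have \<alpha>1: "2 * (2 / \<rho>^2) \<le> 2 * \<alpha>"
    and \<alpha>2: "2 * lam * ((2 * K + 2) / (lam * \<rho>^2)) \<le> 2 * lam * \<alpha>"
    using \<open>0 < lam\<close> by (simp, intro mult_left_mono) simp_all
  have "2 * (2 / \<rho>^2) * (\<rho>^2 / 4) \<le> 2 * \<alpha> * (dist c w)^2"
    by (rule mult_mono[OF \<alpha>1 dist_sq]) (use \<open>0 < \<alpha>\<close> in simp_all)
  moreover have "2 * lam * ((2 * K + 2) / (lam * \<rho>^2)) * (\<rho>^2 / 4) \<le> 2 * lam * \<alpha> * (dist c w)^2"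
    by (rule mult_mono[OF \<alpha>2 dist_sq]) (use \<open>0 < \<alpha>\<close> \<open>0 < lam\<close> in simp_all)
  moreover have "dist c w * k w \<le> dist c w * B"
    using bound[of w] w by (intro mult_left_mono) auto
  moreover have "dist c w * B \<le> 2 * \<rho> * B"
    using w \<open>0 < B\<close> by (intro mult_right_mono) auto
  moreover have "2 * (2 / \<rho>^2) * (\<rho>^2 / 4) = 1"
    and "2 * lam * ((2 * K + 2) / (lam * \<rho>^2)) * (\<rho>^2 / 4) = K + 1"
    using \<open>0 < \<rho>\<close> \<open>0 < lam\<close> by (simp_all add: field_simps)
  ultimately show "1 \<le> 2 * \<alpha> * (dist c w)^2 \<and> dist c w * k w + C < 2 * lam * \<alpha> * (dist c w)^2"
    unfolding K_def by linarith
qed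

lemma subsolution_constant_of_max:
  fixes F :: "real^'n \<Rightarrow> real \<Rightarrow> real^'n \<Rightarrow> real^'n^'n \<Rightarrow> real"
    and bb :: "real^'n \<Rightarrow> real^'n" and g cc :: "real^'n \<Rightarrow> real" and u :: "real^'n \<Rightarrow> real"
  assumes lam_pos: "0 < lam"
    and elliptic: "\<And>x t p X Q. symmetric_mat X \<Longrightarrow> psd Q \<Longrightarrow>
        lam * trace Q \<le> F x t p X - F x t p (X + Q) \<and> F x t p X - F x t p (X + Q) \<le> Lam * trace Q"
    and F_lower: "\<And>x t p. F x t p 0 \<ge> - (bb x \<bullet> p) - g x * norm p + cc x * t"
    and bb_cont: "continuous_on UNIV bb" and g_cont: "continuous_on UNIV g"
    and cc_u: "\<And>x. 0 \<le> cc x * u x"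
    and sub: "visc_subsolution F u"
    and max: "\<And>x. u x \<le> u z"
  shows "u x = u z"
proof (rule ccontr)
  assume "u x \<noteq> u z"
  with max have "u x < u z" by (simp add: order.strict_iff_order)
  have "usc u" using sub by (simp add: visc_subsolution_def)
  then obtain \<rho> x1 where "0 < \<rho>" "dist x x1 = \<rho>" "u z \<le> u x1"
    and inside: "\<And>w. dist x w < \<rho> \<Longrightarrow> u w < u z"
    using usc_touching_ball[OF _ \<open>u x < u z\<close> order_refl] by blast
  obtain w0 where "w0 \<in> cball x (\<rho> / 2)" and w0: "\<And>w. w \<in> cball x (\<rho> / 2) \<Longrightarrow> u w \<le> u w0"
    using usc_attains_max[OF \<open>usc u\<close> compact_cball, of x "\<rho> / 2"] \<open>0 < \<rho>\<close> by auto
  define \<delta> where "\<delta> = (u z - u w0) / 2"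
  have "0 < \<delta>" using inside[of w0] \<open>w0 \<in> cball x (\<rho> / 2)\<close> \<open>0 < \<rho>\<close> by (simp add: \<delta>_def)
  have "bounded ((\<lambda>w. norm (bb w) + g w) ` cball x (2 * \<rho>))"
    by (intro compact_imp_bounded compact_continuous_image compact_cball continuous_intros
        continuous_on_subset[OF bb_cont] continuous_on_subset[OF g_cont]) auto
  then obtain B where "0 < B" and B: "\<And>w. dist x w \<le> 2 * \<rho> \<Longrightarrow> norm (bb w) + g w \<le> B"
    unfolding bounded_pos by force
  obtain \<alpha> where "0 < \<alpha>" and dominant: "\<And>w. \<rho> / 2 < dist x w \<Longrightarrow> dist x w < 2 * \<rho> \<Longrightarrow>
      1 \<le> 2 * \<alpha> * (dist x w)^2 \<and>
      dist x w * (norm (bb w) + g w) + (Lam * (real CARD('n) - 1) + lam) < 2 * lam * \<alpha> * (dist x w)^2"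
    using exists_exponent_dominating[where c = x and k = "\<lambda>w. norm (bb w) + g w"
        and C = "Lam * (real CARD('n) - 1) + lam", OF lam_pos \<open>0 < \<rho>\<close> \<open>0 < B\<close> B] by blast
  have "u x1 < u z + \<delta> * exp (- \<alpha> * \<rho>^2) - \<delta> * exp (- \<alpha> * (dist x x1)^2)"
  proof (rule subsolution_below_exp_barrier[where ra = "\<rho> / 2" and rb = "2 * \<rho>",
        OF elliptic F_lower cc_u sub \<open>0 < \<delta>\<close> \<open>0 < \<alpha>\<close> dominant[unfolded add.assoc[symmetric]]])
    fix w assume "dist x w = \<rho> / 2 \<or> dist x w = 2 * \<rho>"
    then show "u w < u z + \<delta> * exp (- \<alpha> * \<rho>^2) - \<delta> * exp (- \<alpha> * (dist x w)^2)"
    proof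
      assume "dist x w = \<rho> / 2"
      then have "u w \<le> u z - 2 * \<delta>" using w0[of w] by (simp add: \<delta>_def field_simps)
      moreover have "\<delta> * exp (- \<alpha> * (dist x w)^2) \<le> \<delta>" using \<open>0 < \<delta>\<close> \<open>0 < \<alpha>\<close> by simp
      ultimately show ?thesis using \<open>0 < \<delta>\<close> by (smt (verit) exp_gt_zero mult_pos_pos)
    next
      assume "dist x w = 2 * \<rho>"
      then have "exp (- \<alpha> * (dist x w)^2) < exp (- \<alpha> * \<rho>^2)"
        using \<open>0 < \<alpha>\<close> \<open>0 < \<rho>\<close> by (simp add: power2_eq_square)
      then have "\<delta> * exp (- \<alpha> * (dist x w)^2) < \<delta> * exp (- \<alpha> * \<rho>^2)"
        using \<open>0 < \<delta>\<close> by (rule mult_strict_left_mono)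
      then show ?thesis using max[of w] by linarith
    qed
  qed (use \<open>dist x x1 = \<rho>\<close> \<open>0 < \<rho>\<close> in auto)
  then show False using \<open>dist x x1 = \<rho>\<close> \<open>u z \<le> u x1\<close> by simp
qed

lemma loc_lipschitz_imp_continuous_on:
  fixes f :: "'a::metric_space \<Rightarrow> 'b::metric_space"
  assumes "loc_lipschitz f"
  shows "continuous_on UNIV f"
proof -
  have "isCont f x" for x
  proof -
    obtain r L where "0 < r" and lipschitz: "L-lipschitz_on (cball x r) f"
      using assms unfolding loc_lipschitz_def by blast
    from lipschitz have "continuous_on (cball x r) f" by (rule lipschitz_on_continuous_on)
    then have "continuous_on (ball x r) f" by (rule continuous_on_subset) (rule ball_subset_cball)
    then show ?thesis using \<open>0 < r\<close>
      by (meson centre_in_ball continuous_on_eq_continuous_at open_ball)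
  qed
  then show ?thesis by (simp add: continuous_at_imp_continuous_on)
qed

theorem corollary3p3:
  fixes F :: "real^'n \<Rightarrow> real \<Rightarrow> real^'n \<Rightarrow> real^'n^'n \<Rightarrow> real"
    and lam Lam :: real
    and bb :: "real^'n \<Rightarrow> real^'n" and g cc :: "real^'n \<Rightarrow> real"
    and Ro :: real and u :: "real^'n \<Rightarrow> real"
  assumes F_cont: "continuous_on {(x, t, p, X). symmetric_mat X} (\<lambda>(x, t, p, X). F x t p X)"
    and lam_pos: "0 < lam" and lam_le: "lam \<le> Lam"
    and elliptic: "\<And>x t p X Q. symmetric_mat X \<Longrightarrow> psd Q \<Longrightarrow>
        lam * trace Q \<le> F x t p X - F x t p (X + Q) \<and> F x t p X - F x t p (X + Q) \<le> Lam * trace Q"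
    and F_lower: "\<And>x t p. F x t p 0 \<ge> - (bb x \<bullet> p) - g x * norm p + cc x * t"
    and bb_lip: "loc_lipschitz bb" and g_lip: "loc_lipschitz g"
    and cc_cont: "continuous_on UNIV cc"
    and g_nonneg: "\<And>x. g x \<ge> 0" and cc_nonneg: "\<And>x. cc x \<ge> 0"
    and Ro_pos: "Ro > 0"
    and growth: "\<And>x. norm x \<ge> Ro \<Longrightarrow>
        bb x \<bullet> x + g x * norm x \<le> cc x * (norm x)\<^sup>2 * ln (norm x) + lam - (real CARD('n) - 1) * Lam"
    and sub: "visc_subsolution F u"
    and limsup: "Limsup at_infinity (\<lambda>x. ereal (u x / ln (norm x))) \<le> 0"
    and alt: "(\<forall>x. cc x = 0) \<or> (\<forall>x. u x \<ge> 0)"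
  shows "\<exists>k. \<forall>x. u x = k"
proof -
  obtain z where max: "\<And>x. u x \<le> u z"
    using subsolution_attains_max[OF lam_pos elliptic F_lower cc_nonneg growth sub limsup alt] by blast
  have "0 \<le> cc x * u x" for x
    using alt cc_nonneg[of x] by auto
  then have "u x = u z" for x
    using subsolution_constant_of_max[OF lam_pos elliptic F_lower
        loc_lipschitz_imp_continuous_on[OF bb_lip] loc_lipschitz_imp_continuous_on[OF g_lip] _ sub max]
    by blast
  then show ?thesis by blast
qed

end
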